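(* Consider an open quantum system on a finite-dimensional Hilbert space $\mathcal H$ with Hamiltonian $H$ and coupling operators $L_1,\dots,L_K$. Let $W_1,\dots,W_N$ be observables commuting with $H$, each positive semidefinite with smallest eigenvalue $0$, and let $W=\sum_{\lambda=1}^NW_\lambda$. Suppose that for each $\lambda\in\{1,\dots,N\}$ there exists an index $k\in\{1,\dots,K\}$ and a constant $c_\lambda>0$ such that $\mathcal G(W_\lambda)_{L_k}\le -c_\lambda W_\lambda$ and $\sum_{k'=1,k'\neq k}^K\mathcal G(W_\lambda)_{L_{k'}}\le0$. Then $W$ is asymptotically ground-state stable.
   Context: The density state (positive semidefinite, trace one) evolves by $\dot\rho_t=-i[H,\rho_t]+\sum_{k=1}^K\big(L_k\rho_tL_k^\dagger-\tfrac12L_k^\dagger L_k\rho_t-\tfrac12\rho_tL_k^\dagger L_k\big)$. For an observable $X$ the single-channel generator component is $\mathcal G(X)_{L_k}=L_k^\dagger XL_k-\tfrac12L_k^\dagger L_kX-\tfrac12XL_k^\dagger L_k$, and for $X$ commuting with $H$, $\frac{d}{dt}\operatorname{tr}(X\rho_t)=\operatorname{tr}(\mathcal G(X)\rho_t)$ with $\mathcal G(X)=\sum_k\mathcal G(X)_{L_k}$. An observable $X$ with smallest eigenvalue $d$ is asymptotically ground-state stable if $\operatorname{tr}(X\rho_t)\to d$ as $t\to\infty$ for every initial density state $\rho_0$. *)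

theory Defs
  imports "HOL-Analysis.Analysis"
begin

type_synonym 'n cmat = "complex^'n^'n"

definition adj :: "'n::finite cmat \<Rightarrow> 'n cmat" where
  "adj A = (\<chi> i j. cnj (A $ j $ i))"

definition cscale :: "complex \<Rightarrow> 'n::finite cmat \<Rightarrow> 'n cmat" where
  "cscale c A = (\<chi> i j. c * A $ i $ j)"

definition ctrace :: "'n::finite cmat \<Rightarrow> complex" where
  "ctrace A = (\<Sum>i\<in>UNIV. A $ i $ i)"

definition cinner :: "complex^'n::finite \<Rightarrow> complex^'n \<Rightarrow> complex" where
  "cinner x y = (\<Sum>i\<in>UNIV. cnj (x $ i) * y $ i)"

definition hermitian :: "'n::finite cmat \<Rightarrow> bool" where
  "hermitian A \<longleftrightarrow> adj A = A"

definition psd :: "'n::finite cmat \<Rightarrow> bool" where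
  "psd A \<longleftrightarrow> hermitian A \<and> (\<forall>x. 0 \<le> Re (cinner x (A *v x)))"

definition loewner_le :: "'n::finite cmat \<Rightarrow> 'n cmat \<Rightarrow> bool" where
  "loewner_le A B \<longleftrightarrow> psd (B - A)"

definition is_eigenvalue :: "'n::finite cmat \<Rightarrow> complex \<Rightarrow> bool" where
  "is_eigenvalue A c \<longleftrightarrow> (\<exists>v. v \<noteq> 0 \<and> A *v v = c *s v)"

text \<open>\<open>d\<close> is the smallest eigenvalue of the (Hermitian, hence real-spectrum) observable \<open>X\<close>.\<close>
definition is_min_eigenvalue :: "'n::finite cmat \<Rightarrow> real \<Rightarrow> bool" where
  "is_min_eigenvalue X d \<longleftrightarrow>
     is_eigenvalue X (complex_of_real d) \<and> (\<forall>c. is_eigenvalue X c \<longrightarrow> d \<le> Re c)"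

definition density :: "'n::finite cmat \<Rightarrow> bool" where
  "density \<rho> \<longleftrightarrow> psd \<rho> \<and> ctrace \<rho> = 1"

definition gen :: "'n::finite cmat \<Rightarrow> 'n cmat \<Rightarrow> 'n cmat" where
  "gen L X = adj L ** X ** L - cscale (1/2) (adj L ** L ** X) - cscale (1/2) (X ** adj L ** L)"

definition lindblad :: "'n::finite cmat \<Rightarrow> (nat \<Rightarrow> 'n cmat) \<Rightarrow> nat \<Rightarrow> 'n cmat \<Rightarrow> 'n cmat" where
  "lindblad H L K \<rho> =
     cscale (- \<i>) (H ** \<rho> - \<rho> ** H)
     + (\<Sum>k\<in>{1..K}. L k ** \<rho> ** adj (L k) - cscale (1/2) (adj (L k) ** L k ** \<rho>)
                                              - cscale (1/2) (\<rho> ** adj (L k) ** L k))"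

definition lindblad_solution :: "'n::finite cmat \<Rightarrow> (nat \<Rightarrow> 'n cmat) \<Rightarrow> nat \<Rightarrow> (real \<Rightarrow> 'n cmat) \<Rightarrow> bool" where
  "lindblad_solution H L K \<rho> \<longleftrightarrow>
     (\<forall>t\<ge>0. (\<rho> has_vector_derivative lindblad H L K (\<rho> t)) (at t within {0..}))"

definition agss :: "'n::finite cmat \<Rightarrow> (nat \<Rightarrow> 'n cmat) \<Rightarrow> nat \<Rightarrow> 'n cmat \<Rightarrow> bool" where
  "agss H L K X \<longleftrightarrow>
     (\<forall>d \<rho>. is_min_eigenvalue X d \<longrightarrow> lindblad_solution H L K \<rho> \<longrightarrow> density (\<rho> 0) \<longrightarrow>
        ((\<lambda>t. ctrace (X ** \<rho> t)) \<longlongrightarrow> complex_of_real d) at_top)"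

end

theory Submission
  imports Defs
begin

text \<open>Every Lindblad trajectory starting in a density state stays one: the trace is conserved
  since \<open>tr \<G>(I) = 0\<close>, and positivity is preserved by a barrier argument, because on the
  kernel of a positive semidefinite state the generator only contributes the nonnegative jump
  terms.  For each \<open>W\<^sub>\<lambda>\<close> the two Loewner inequalities then give
  \<open>d/dt tr(W\<^sub>\<lambda> \<rho>\<^sub>t) = tr(\<G>(W\<^sub>\<lambda>) \<rho>\<^sub>t) \<le> -c\<^sub>\<lambda> tr(W\<^sub>\<lambda> \<rho>\<^sub>t)\<close>,
  so \<open>tr(W \<rho>\<^sub>t) \<rightarrow> 0\<close> exponentially.  As \<open>tr \<rho>\<^sub>t = 1\<close>, this forces \<open>W \<ge> 0\<close> to have a
  nontrivial kernel, so its smallest eigenvalue is \<open>0\<close>, the limit.\<close>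

section \<open>Matrix algebra over \<open>\<complex>\<close>\<close>

definition qform :: "'n::finite cmat \<Rightarrow> complex^'n \<Rightarrow> complex" where
  "qform A x = cinner x (A *v x)"

definition outer :: "complex^'n::finite \<Rightarrow> 'n cmat" where
  "outer v = (\<chi> i j. v $ i * cnj (v $ j))"

lemma cinner_add_right: "cinner x (y + z) = cinner x y + cinner x z"
  by (simp add: cinner_def distrib_left sum.distrib)

lemma cinner_add_left: "cinner (x + y) z = cinner x z + cinner y z"
  by (simp add: cinner_def distrib_right sum.distrib)

lemma cinner_diff_right: "cinner x (y - z) = cinner x y - cinner x z"
  by (simp add: cinner_def right_diff_distrib sum_subtractf)

lemma cinner_scale_right: "cinner x (c *s y) = c * cinner x y"
  by (simp add: cinner_def sum_distrib_left mult_ac)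

lemma cinner_scale_left: "cinner (c *s x) y = cnj c * cinner x y"
  by (simp add: cinner_def sum_distrib_left mult_ac)

lemma cinner_zero_right [simp]: "cinner x 0 = 0"
  by (simp add: cinner_def)

lemma cinner_zero_left [simp]: "cinner 0 x = 0"
  by (simp add: cinner_def)

lemma cnj_cinner: "cnj (cinner x y) = cinner y x"
  by (simp add: cinner_def mult_ac)

lemma cinner_sum_right: "cinner x (sum f S) = (\<Sum>s\<in>S. cinner x (f s))"
  unfolding cinner_def sum_component sum_distrib_left by (rule sum.swap)

lemma cinner_adj: "cinner x (A *v y) = cinner (adj A *v x) y"
proof -
  have "cinner x (A *v y) = (\<Sum>i\<in>UNIV. \<Sum>j\<in>UNIV. cnj (x$i) * A$i$j * y$j)"
    by (simp add: cinner_def matrix_vector_mult_def sum_distrib_left mult.assoc)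
  also have "\<dots> = (\<Sum>j\<in>UNIV. \<Sum>i\<in>UNIV. cnj (x$i) * A$i$j * y$j)"
    by (rule sum.swap)
  also have "\<dots> = cinner (adj A *v x) y"
    by (simp add: cinner_def adj_def matrix_vector_mult_def sum_distrib_left cnj_sum
        mult.commute mult.left_commute)
  finally show ?thesis .
qed

lemma cinner_self: "cinner x x = complex_of_real ((norm x)^2)"
proof -
  have "(norm x)^2 = (\<Sum>i\<in>UNIV. (cmod (x $ i))^2)"
    by (simp add: norm_vec_def L2_set_def sum_nonneg)
  moreover have "\<And>z. cnj z * z = complex_of_real ((cmod z)^2)"
    by (metis complex_norm_square mult.commute)
  ultimately show ?thesis
    by (simp add: cinner_def of_real_sum)
qed

lemma cinner_axis_left: "cinner (axis i 1) y = y $ i"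
proof -
  have "(\<Sum>j\<in>UNIV. cnj ((axis i 1)$j) * y$j) = (\<Sum>j\<in>UNIV. if j = i then y$j else 0)"
    by (rule sum.cong) (auto simp: axis_def)
  then show ?thesis by (simp add: cinner_def)
qed

lemma matrix_vector_mult_axis: "((A::'n::finite cmat) *v axis i 1) $ j = A $ j $ i"
proof -
  have "(\<Sum>k\<in>UNIV. A$j$k * (axis i 1)$k) = (\<Sum>k\<in>UNIV. if k = i then A$j$i else 0)"
    by (rule sum.cong) (auto simp: axis_def)
  then show ?thesis by (simp add: matrix_vector_mult_def)
qed

lemma matrix_eq_0_if_mult_vector_eq_0:
  assumes "\<And>x. (A::'n::finite cmat) *v x = 0"
  shows "A = 0"
proof -
  have "A $ j $ i = 0" for i j
    using assms[of "axis i 1"] matrix_vector_mult_axis[of A i j] by simp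
  then show ?thesis by (simp add: vec_eq_iff)
qed

lemma matrix_vector_mult_scale: "(A::'n::finite cmat) *v (c *s x) = c *s (A *v x)"
  by (simp add: matrix_vector_mult_def vec_eq_iff sum_distrib_left mult_ac)

lemma matrix_add_rdistrib: "((A::'n::finite cmat) + B) ** C = A ** C + B ** C"
  by (simp add: matrix_matrix_mult_def vec_eq_iff distrib_right sum.distrib)

lemma matrix_diff_rdistrib: "((A::'n::finite cmat) - B) ** C = A ** C - B ** C"
  by (simp add: matrix_matrix_mult_def vec_eq_iff left_diff_distrib sum_subtractf)

lemma matrix_diff_ldistrib: "(A::'n::finite cmat) ** (B - C) = A ** B - A ** C"
  by (simp add: matrix_matrix_mult_def vec_eq_iff right_diff_distrib sum_subtractf)

lemma matrix_sum_ldistrib: "(A::'n::finite cmat) ** sum f S = (\<Sum>s\<in>S. A ** f s)"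
proof (induction S rule: infinite_finite_induct)
  case (insert x F) then show ?case by (simp add: matrix_add_ldistrib)
qed simp_all

lemma matrix_sum_rdistrib: "(sum f S :: 'n::finite cmat) ** A = (\<Sum>s\<in>S. f s ** A)"
proof (induction S rule: infinite_finite_induct)
  case (insert x F) then show ?case by (simp add: matrix_add_rdistrib)
qed simp_all

lemma matrix_scaleR_right: "(A::'n::finite cmat) ** (r *\<^sub>R B) = r *\<^sub>R (A ** B)"
  using matrix_scalar_ac[of A r B] scalar_matrix_assoc[of r A B] by metis

lemma sum_matrix_vector_mult: "(sum f S :: 'n::finite cmat) *v x = (\<Sum>s\<in>S. f s *v x)"
  unfolding vec_eq_iff matrix_vector_mult_def sum_component sum_distrib_right
  by (simp add: sum_component sum.swap[of _ UNIV S])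

lemma adj_adj [simp]: "adj (adj A) = A"
  by (simp add: adj_def vec_eq_iff)

lemma adj_mult: "adj (A ** B) = adj B ** adj A"
  by (simp add: adj_def matrix_matrix_mult_def vec_eq_iff mult.commute)

lemma adj_add: "adj (A + B) = adj A + adj B"
  by (simp add: adj_def vec_eq_iff)

lemma adj_diff: "adj (A - B) = adj A - adj B"
  by (simp add: adj_def vec_eq_iff)

lemma adj_cscale: "adj (cscale c A) = cscale (cnj c) (adj A)"
  by (simp add: adj_def cscale_def vec_eq_iff)

lemma adj_scaleR: "adj (r *\<^sub>R A) = r *\<^sub>R adj A"
  by (simp add: adj_def vec_eq_iff complex_cnj_scaleR)

lemma adj_sum: "adj (sum f S) = (\<Sum>s\<in>S. adj (f s))"
  by (simp add: adj_def vec_eq_iff sum_component)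

lemma adj_outer: "adj (outer v) = outer v"
  by (simp add: adj_def outer_def vec_eq_iff mult.commute)

lemma cscale_mult_left: "cscale c A ** B = cscale c (A ** B)"
  by (simp add: cscale_def matrix_matrix_mult_def vec_eq_iff sum_distrib_left mult_ac)

lemma cscale_mult_right: "A ** cscale c B = cscale c (A ** B)"
  by (simp add: cscale_def matrix_matrix_mult_def vec_eq_iff sum_distrib_left mult_ac)

lemma cscale_add: "cscale c (A + B) = cscale c A + cscale c B"
  by (simp add: cscale_def vec_eq_iff distrib_left)

lemma cscale_diff: "cscale c (A - B) = cscale c A - cscale c B"
  by (simp add: cscale_def vec_eq_iff right_diff_distrib)

lemma cscale_cscale: "cscale c (cscale d A) = cscale (c * d) A"
  by (simp add: cscale_def vec_eq_iff)

lemma cscale_sum: "cscale c (sum f S) = (\<Sum>s\<in>S. cscale c (f s))"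
  by (simp add: cscale_def vec_eq_iff sum_component sum_distrib_left)

lemma cscale_scaleR_commute: "cscale c (r *\<^sub>R A) = r *\<^sub>R cscale c A"
  by (simp add: cscale_def vec_eq_iff scaleR_conv_of_real[where 'a=complex] mult_ac)

lemma cscale_of_real: "cscale (complex_of_real r) A = r *\<^sub>R A"
  by (simp add: cscale_def vec_eq_iff scaleR_conv_of_real[where 'a=complex])

lemma cscale_minus_diff: "cscale (- c) (Y - X) = cscale c (X - Y)"
  by (simp add: cscale_def vec_eq_iff algebra_simps)

lemma cscale_matrix_vector_mult: "cscale c A *v x = c *s (A *v x)"
  by (simp add: cscale_def matrix_vector_mult_def vec_eq_iff sum_distrib_left mult_ac)

lemma ctrace_zero [simp]: "ctrace 0 = 0"
  by (simp add: ctrace_def)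

lemma ctrace_add: "ctrace (A + B) = ctrace A + ctrace B"
  by (simp add: ctrace_def sum.distrib)

lemma ctrace_diff: "ctrace (A - B) = ctrace A - ctrace B"
  by (simp add: ctrace_def sum_subtractf)

lemma ctrace_cscale: "ctrace (cscale c A) = c * ctrace A"
  by (simp add: ctrace_def cscale_def sum_distrib_left)

lemma ctrace_scaleR: "ctrace (r *\<^sub>R A) = r *\<^sub>R ctrace A"
  by (simp add: ctrace_def scaleR_sum_right)

lemma ctrace_sum: "ctrace (sum f S) = (\<Sum>s\<in>S. ctrace (f s))"
  unfolding ctrace_def sum_component by (rule sum.swap)

lemma ctrace_adj: "ctrace (adj A) = cnj (ctrace A)"
  unfolding ctrace_def adj_def by (simp add: cnj_sum)

lemma ctrace_mult_commute: "ctrace (A ** B) = ctrace (B ** A)"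
proof -
  have "ctrace (A ** B) = (\<Sum>i\<in>UNIV. \<Sum>j\<in>UNIV. A$i$j * B$j$i)"
    by (simp add: ctrace_def matrix_matrix_mult_def)
  also have "\<dots> = (\<Sum>j\<in>UNIV. \<Sum>i\<in>UNIV. A$i$j * B$j$i)"
    by (rule sum.swap)
  also have "\<dots> = ctrace (B ** A)"
    by (simp add: ctrace_def matrix_matrix_mult_def mult.commute)
  finally show ?thesis .
qed

lemma ctrace_mult_outer: "ctrace (A ** outer v) = qform A v"
proof -
  have "ctrace (A ** outer v) = (\<Sum>i\<in>UNIV. \<Sum>j\<in>UNIV. A$i$j * v$j * cnj (v$i))"
    by (simp add: ctrace_def matrix_matrix_mult_def outer_def mult.assoc)
  also have "\<dots> = qform A v"
    by (simp add: qform_def cinner_def matrix_vector_mult_def sum_distrib_left mult_ac)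
  finally show ?thesis .
qed

lemma bounded_linear_ctrace: "bounded_linear (ctrace :: 'n::finite cmat \<Rightarrow> complex)"
proof -
  have "linear (ctrace :: 'n cmat \<Rightarrow> complex)"
    by (rule linearI) (simp_all add: ctrace_add ctrace_scaleR)
  then show ?thesis by (simp add: linear_conv_bounded_linear)
qed

lemma bounded_linear_Re_ctrace_mult:
  "bounded_linear (\<lambda>A::'n::finite cmat. Re (ctrace (X ** A)))"
proof -
  have "linear (\<lambda>A::'n cmat. Re (ctrace (X ** A)))"
    by (rule linearI) (simp_all add: matrix_add_ldistrib ctrace_add matrix_scaleR_right ctrace_scaleR)
  then show ?thesis by (simp add: linear_conv_bounded_linear)
qed

lemma qform_add: "qform (A + B) x = qform A x + qform B x"
  by (simp add: qform_def matrix_vector_mult_add_rdistrib cinner_add_right)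

lemma qform_diff: "qform (A - B) x = qform A x - qform B x"
  by (simp add: qform_def matrix_vector_mult_diff_rdistrib cinner_diff_right)

lemma qform_cscale: "qform (cscale c A) x = c * qform A x"
  by (simp add: qform_def cscale_matrix_vector_mult cinner_scale_right)

lemma qform_scaleR: "qform (r *\<^sub>R A) x = complex_of_real r * qform A x"
  by (metis qform_cscale cscale_of_real)

lemma qform_sum: "qform (sum f S) x = (\<Sum>s\<in>S. qform (f s) x)"
  by (simp add: qform_def sum_matrix_vector_mult cinner_sum_right)

lemma qform_one: "qform (mat 1) x = complex_of_real ((norm x)^2)"
  by (simp add: qform_def cinner_self)

lemma qform_scale: "qform A (c *s x) = cnj c * c * qform A x"
  by (simp add: qform_def matrix_vector_mult_scale cinner_scale_left cinner_scale_right)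

lemma qform_scaleR_vector: "qform A (r *\<^sub>R x) = complex_of_real (r^2) * qform A x"
proof -
  have "r *\<^sub>R x = complex_of_real r *s x"
    by (simp add: vec_eq_iff scaleR_conv_of_real[where 'a=complex])
  then show ?thesis by (simp add: qform_scale power2_eq_square)
qed

lemma qform_axis: "qform A (axis i 1) = A $ i $ i"
  by (simp add: qform_def cinner_axis_left matrix_vector_mult_axis)

lemma qform_outer: "qform (outer v) x = complex_of_real ((cmod (cinner v x))^2)"
proof -
  have "outer v *v x = cinner v x *s v"
    by (simp add: outer_def matrix_vector_mult_def cinner_def vec_eq_iff sum_distrib_left
        sum_distrib_right mult.assoc mult.commute mult.left_commute)
  then have "qform (outer v) x = cinner v x * cnj (cinner v x)"
    by (simp add: qform_def cinner_scale_right cnj_cinner)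
  then show ?thesis by (simp add: complex_norm_square[symmetric])
qed

lemma continuous_on_Re_qform_compose:
  assumes "continuous_on S f" "continuous_on S g"
  shows "continuous_on S (\<lambda>p. Re (qform (f p) (g p)))"
proof -
  have "continuous_on UNIV (\<lambda>p::'n::finite cmat \<times> (complex^'n). Re (qform (fst p) (snd p)))"
    unfolding qform_def cinner_def matrix_vector_mult_def by (intro continuous_intros)
  from continuous_on_compose2[OF this continuous_on_Pair[OF assms]] show ?thesis by simp
qed

lemma continuous_on_Re_qform: "continuous_on S (\<lambda>x. Re (qform A x))"
  by (intro continuous_on_Re_qform_compose continuous_intros)

lemma bounded_linear_Re_qform: "bounded_linear (\<lambda>A::'n::finite cmat. Re (qform A x))"
proof -
  have "linear (\<lambda>A::'n cmat. Re (qform A x))"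
    by (rule linearI) (simp_all add: qform_add qform_scaleR)
  then show ?thesis by (simp add: linear_conv_bounded_linear)
qed

lemma hermitian_cinner_swap: "hermitian A \<Longrightarrow> cinner y (A *v x) = cnj (cinner x (A *v y))"
  by (metis cinner_adj cnj_cinner hermitian_def)

lemma hermitian_qform_real: "hermitian A \<Longrightarrow> qform A x = complex_of_real (Re (qform A x))"
  using hermitian_cinner_swap[of A x x] by (metis Reals_cnj_iff Reals_def of_real_Re qform_def)

lemma hermitian_entry: "hermitian A \<Longrightarrow> A $ j $ i = cnj (A $ i $ j)"
proof -
  assume "hermitian A"
  then have "adj A $ j $ i = A $ j $ i" by (simp add: hermitian_def)
  then show ?thesis by (simp add: adj_def)
qed

lemma qform_add_scale:
  assumes "hermitian A"
  shows "qform A (x + t *s y) = qform A x + t * cinner x (A *v y)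
           + cnj t * cnj (cinner x (A *v y)) + cnj t * t * qform A y"
  unfolding qform_def
  by (simp add: matrix_vector_right_distrib matrix_vector_mult_scale cinner_add_left cinner_add_right
      cinner_scale_left cinner_scale_right hermitian_cinner_swap[OF assms, of y x] algebra_simps)

lemma qform_unit_attains_inf:
  obtains x0 :: "complex^'n::finite" where "norm x0 = 1"
    "\<And>y. norm y = 1 \<Longrightarrow> Re (qform A x0) \<le> Re (qform A y)"
  using continuous_attains_inf[OF compact_sphere _ continuous_on_Re_qform, of 0 1 A] by auto

lemma qform_unit_attains_sup:
  obtains x0 :: "complex^'n::finite" where "norm x0 = 1"
    "\<And>y. norm y = 1 \<Longrightarrow> Re (qform A y) \<le> Re (qform A x0)"
  using continuous_attains_sup[OF compact_sphere _ continuous_on_Re_qform, of 0 1 A] by auto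

lemma qform_homogeneous:
  assumes "x \<noteq> 0"
  obtains y where "norm y = 1" "Re (qform A x) = (norm x)^2 * Re (qform A y)"
proof
  let ?y = "(1 / norm x) *\<^sub>R x"
  show "norm ?y = 1" using assms by simp
  have "x = norm x *\<^sub>R ?y" using assms by simp
  then have "qform A x = complex_of_real ((norm x)^2) * qform A ?y"
    by (metis qform_scaleR_vector)
  then show "Re (qform A x) = (norm x)^2 * Re (qform A ?y)" by simp
qed

section \<open>Positive semidefinite matrices\<close>

lemma psd_qform_nonneg: "psd A \<Longrightarrow> 0 \<le> Re (qform A x)"
  by (simp add: psd_def qform_def)

lemma psd_zero: "psd (0::'n::finite cmat)"
  by (simp add: psd_def hermitian_def adj_def vec_eq_iff)

lemma psd_add: "psd A \<Longrightarrow> psd B \<Longrightarrow> psd (A + B)"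
  by (auto simp: psd_def hermitian_def adj_add matrix_vector_mult_add_rdistrib cinner_add_right)

lemma psd_sum: "(\<And>i. i \<in> S \<Longrightarrow> psd (f i)) \<Longrightarrow> psd (sum f S)"
proof (induction S rule: infinite_finite_induct)
  case (insert x F) then show ?case by (simp add: psd_add)
qed (simp_all add: psd_zero)

lemma psdI_unit_sphere:
  assumes "hermitian A" and "\<And>y. norm y = 1 \<Longrightarrow> 0 \<le> Re (qform A y)"
  shows "psd A"
  unfolding psd_def
proof (intro conjI assms(1) allI)
  fix x :: "complex^'a"
  show "0 \<le> Re (cinner x (A *v x))"
  proof (cases "x = 0")
    case False
    then obtain y where "norm y = 1" "Re (qform A x) = (norm x)^2 * Re (qform A y)"
      by (rule qform_homogeneous)
    then show ?thesis using assms(2) by (simp add: qform_def)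
  qed simp
qed

text \<open>A vector on which a positive semidefinite form vanishes lies in the kernel: otherwise
  moving from \<open>x\<close> in the direction \<open>- A x\<close> would make the form negative.\<close>
lemma psd_kernel_if_qform_eq_0:
  assumes "psd A" "Re (qform A x) = 0"
  shows "A *v x = 0"
proof -
  have hA: "hermitian A" using assms(1) by (simp add: psd_def)
  define nn where "nn = (norm (A *v x))^2"
  define p where "p = Re (qform A (A *v x))"
  have p0: "p \<ge> 0" using assms(1) by (simp add: p_def psd_qform_nonneg)
  have c: "cinner x (A *v (A *v x)) = complex_of_real nn"
    using hA by (simp add: cinner_adj hermitian_def cinner_self nn_def)
  have key: "0 \<le> 2*u*nn + u^2*p" for u :: real
  proof -
    have "0 \<le> Re (qform A (x + complex_of_real u *s (A *v x)))"
      using assms(1) by (rule psd_qform_nonneg)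
    also have "\<dots> = 2*u*nn + u^2*p"
      by (simp add: qform_add_scale[OF hA] c p_def power2_eq_square assms(2))
    finally show ?thesis .
  qed
  define u where "u = - nn / (p + 1)"
  have e: "u * (p + 1) = - nn" using p0 by (simp add: u_def)
  have "(p+1)^2 * (2*u*nn + u^2*p) = 2*(u*(p+1))*nn*(p+1) + (u*(p+1))^2*p"
    by (simp add: algebra_simps power2_eq_square)
  also have "\<dots> = - (nn^2 * (p + 2))"
    by (simp only: e) (simp add: algebra_simps power2_eq_square)
  finally have "nn^2 * (p + 2) \<le> 0"
    using key[of u] by (metis neg_0_le_iff_le zero_le_mult_iff zero_le_power2)
  then have "nn = 0" using p0 by (simp add: mult_le_0_iff)
  then show ?thesis by (simp add: nn_def)
qed

lemma psd_antisym: "psd A \<Longrightarrow> psd (- A) \<Longrightarrow> A = 0"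
proof (rule matrix_eq_0_if_mult_vector_eq_0)
  fix x
  assume "psd A" "psd (- A)"
  moreover have "qform (- A) x = - qform A x"
    by (simp add: qform_def cinner_def matrix_vector_mult_def sum_negf)
  ultimately have "Re (qform A x) = 0"
    using psd_qform_nonneg[of A x] psd_qform_nonneg[of "- A" x] by simp
  with \<open>psd A\<close> show "A *v x = 0" by (rule psd_kernel_if_qform_eq_0)
qed

lemma psd_cauchy_schwarz:
  assumes "psd A"
  shows "(cmod (cinner x (A *v y)))^2 \<le> Re (qform A x) * Re (qform A y)"
proof -
  have hA: "hermitian A" using assms(1) by (simp add: psd_def)
  define b where "b = cinner x (A *v y)"
  define a where "a = Re (qform A x)"
  have a0: "a \<ge> 0" using assms by (simp add: a_def psd_qform_nonneg)
  show ?thesis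
  proof (cases "a = 0")
    case True
    then have "A *v x = 0" using psd_kernel_if_qform_eq_0[OF assms] by (simp add: a_def)
    then have "b = 0" using hA by (simp add: b_def cinner_adj hermitian_def)
    then show ?thesis using True by (simp add: b_def a_def)
  next
    case False
    then have apos: "a > 0" using a0 by simp
    define t where "t = - b / complex_of_real a"
    have qx: "qform A x = complex_of_real a"
      using hermitian_qform_real[OF hA, of x] unfolding a_def .
    have cb: "cinner y (A *v x) = cnj b" using hermitian_cinner_swap[OF hA, of y x] unfolding b_def .
    have bb: "b * cnj b = complex_of_real ((cmod b)^2)" by (rule complex_norm_square[symmetric])
    have ane: "complex_of_real a \<noteq> 0" using apos by simp
    have 1: "t * cnj b = - (b * cnj b) / complex_of_real a" by (simp add: t_def)
    have 2: "cnj t * b = - (b * cnj b) / complex_of_real a" by (simp add: t_def mult.commute)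
    have 3: "cnj t * t * complex_of_real a = (b * cnj b) / complex_of_real a"
      using ane unfolding t_def by (simp add: divide_simps mult.commute mult.left_commute)
    have "qform A (y + t *s x) = qform A y - complex_of_real ((cmod b)^2 / a)"
      unfolding qform_add_scale[OF hA] cb complex_cnj_cnj qx 1 2 3 bb by (simp add: of_real_divide)
    moreover have "0 \<le> Re (qform A (y + t *s x))"
      using assms(1) by (rule psd_qform_nonneg)
    ultimately have "(cmod b)^2 / a \<le> Re (qform A y)" by simp
    then show ?thesis using apos by (simp add: a_def b_def field_simps mult.commute)
  qed
qed

lemma psd_row_col_eq_0_if_diag_eq_0:
  assumes ps: "psd A" and "A $ i $ i = 0"
  shows "A $ p $ i = 0" "A $ i $ p = 0"
proof -
  have "A *v axis i 1 = 0"
    using assms by (intro psd_kernel_if_qform_eq_0) (simp_all add: qform_axis)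
  then show col: "A $ p $ i = 0" using matrix_vector_mult_axis[of A i p] by simp
  show "A $ i $ p = 0"
    using col hermitian_entry[of A i p] ps by (simp add: psd_def)
qed

text \<open>One step of a Cholesky factorisation: subtracting the rank-one matrix built from the
  \<open>i\<close>-th column leaves the Schur complement, which is again positive semidefinite by
  Cauchy--Schwarz.\<close>
lemma psd_diff_outer_column:
  assumes ps: "psd A" and apos: "0 < Re (A $ i $ i)"
  defines "v \<equiv> complex_of_real (1 / sqrt (Re (A $ i $ i))) *s (A *v axis i 1)"
  shows "psd (A - outer v)"
    and "(A - outer v) $ p $ q = A $ p $ q - A $ p $ i * A $ i $ q / A $ i $ i"
proof -
  define a where "a = Re (A $ i $ i)"
  have hA: "hermitian A" using ps by (simp add: psd_def)
  have Aii: "A $ i $ i = complex_of_real a"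
    using hermitian_qform_real[OF hA, of "axis i 1"] unfolding qform_axis a_def .
  have sq: "complex_of_real (sqrt a) * complex_of_real (sqrt a) = complex_of_real a"
    using apos by (simp add: a_def flip: of_real_mult)
  have vj: "v $ j = A $ j $ i / complex_of_real (sqrt a)" for j
    by (simp add: v_def a_def matrix_vector_mult_axis divide_inverse mult.commute of_real_inverse)
  show "(A - outer v) $ p $ q = A $ p $ q - A $ p $ i * A $ i $ q / A $ i $ i"
  proof -
    have "(A - outer v) $ p $ q = A $ p $ q - v $ p * cnj (v $ q)"
      by (simp add: outer_def)
    also have "v $ p * cnj (v $ q) = A $ p $ i * A $ i $ q / (complex_of_real (sqrt a) * complex_of_real (sqrt a))"
      by (simp add: vj hermitian_entry[OF hA, of q i])
    finally show ?thesis by (simp only: sq Aii)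
  qed
  show "psd (A - outer v)"
    unfolding psd_def
  proof (intro conjI allI)
    show "hermitian (A - outer v)"
      using hA by (simp add: hermitian_def adj_diff adj_outer)
  next
    fix x
    have cv: "cinner v x = complex_of_real (1 / sqrt a) * cinner (axis i 1) (A *v x)"
      using hA by (simp add: v_def a_def cinner_scale_left cinner_adj[of "axis i 1" A x] hermitian_def)
    have cs: "(cmod (cinner (axis i 1) (A *v x)))^2 \<le> a * Re (qform A x)"
      using psd_cauchy_schwarz[OF ps, of "axis i 1" x] by (simp add: qform_axis a_def)
    have "(cmod (cinner v x))^2 = (cmod (cinner (axis i 1) (A *v x)))^2 / a"
      using apos by (simp add: cv a_def norm_mult power_mult_distrib norm_inverse power_inverse
          divide_inverse mult.commute)
    also have "\<dots> \<le> Re (qform A x)" using cs apos by (simp add: a_def divide_le_eq mult.commute)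
    finally show "0 \<le> Re (cinner x ((A - outer v) *v x))"
      by (simp add: qform_def[symmetric] qform_diff qform_outer)
  qed
qed

lemma psd_eq_sum_outer_if_supported:
  assumes "finite S" "psd A" "\<And>p q. p \<notin> S \<or> q \<notin> S \<Longrightarrow> A $ p $ q = 0"
  shows "\<exists>vs. A = sum_list (map outer vs)"
  using assms
proof (induction S arbitrary: A rule: finite_induct)
  case empty
  then have "A = 0" by (simp add: vec_eq_iff)
  then show ?case by (intro exI[of _ "[]"]) simp
next
  case (insert i S)
  have hA: "hermitian A" using insert.prems(1) by (simp add: psd_def)
  have a0: "0 \<le> Re (A $ i $ i)"
    using psd_qform_nonneg[OF insert.prems(1), of "axis i 1"] by (simp add: qform_axis)
  have Aii: "A $ i $ i = complex_of_real (Re (A $ i $ i))"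
    using hermitian_qform_real[OF hA, of "axis i 1"] by (simp add: qform_axis)
  show ?case
  proof (cases "Re (A $ i $ i) = 0")
    case True
    then have "A $ i $ i = 0" using Aii by simp
    note rc = psd_row_col_eq_0_if_diag_eq_0[OF insert.prems(1) this]
    have "A $ p $ q = 0" if "p \<notin> S \<or> q \<notin> S" for p q
      using that rc insert.prems(2)[of p q] by (cases "p = i"; cases "q = i") auto
    then show ?thesis using insert.IH insert.prems(1) by blast
  next
    case False
    then have apos: "0 < Re (A $ i $ i)" using a0 by simp
    define v where "v = complex_of_real (1 / sqrt (Re (A $ i $ i))) *s (A *v axis i 1)"
    note schur = psd_diff_outer_column[OF insert.prems(1) apos, folded v_def]
    have "A $ i $ i \<noteq> 0" using apos by auto
    then have "(A - outer v) $ p $ q = 0" if "p \<notin> S \<or> q \<notin> S" for p q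
      unfolding schur(2)
      using that insert.prems(2)[of p q] insert.prems(2)[of p i] insert.prems(2)[of i q]
      by (cases "p = i"; cases "q = i") auto
    then obtain vs where "A - outer v = sum_list (map outer vs)"
      using insert.IH schur(1) by blast
    then have "A = sum_list (map outer (v # vs))" by (simp add: algebra_simps)
    then show ?thesis by blast
  qed
qed

lemma psd_eq_sum_outer: "psd (A::'n::finite cmat) \<Longrightarrow> \<exists>vs. A = sum_list (map outer vs)"
  using psd_eq_sum_outer_if_supported[of "UNIV::'n set"] by auto

lemma trace_mult_psd_nonneg:
  assumes "psd Q" "psd A"
  shows "0 \<le> Re (ctrace (Q ** A))"
proof -
  obtain vs where A: "A = sum_list (map outer vs)" using psd_eq_sum_outer[OF assms(2)] by blast
  have "Re (ctrace (Q ** A)) = (\<Sum>v\<leftarrow>vs. Re (qform Q v))"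
    unfolding A by (induction vs) (simp_all add: matrix_add_ldistrib ctrace_add ctrace_mult_outer)
  also have "\<dots> \<ge> 0"
    using assms(1) by (intro sum_list_nonneg) (auto simp: psd_qform_nonneg)
  finally show ?thesis .
qed

lemma trace_mult_hermitian_real:
  assumes "hermitian A" "hermitian B"
  shows "ctrace (A ** B) = complex_of_real (Re (ctrace (A ** B)))"
proof -
  have "cnj (ctrace (A ** B)) = ctrace (adj (A ** B))" by (simp add: ctrace_adj)
  also have "\<dots> = ctrace (A ** B)"
    using assms ctrace_mult_commute[of B A] by (simp add: adj_mult hermitian_def)
  finally show ?thesis by (metis Reals_cnj_iff Reals_def of_real_Re)
qed

lemma psd_eigenvalue_nonneg:
  assumes "psd A" "is_eigenvalue A c"
  shows "0 \<le> Re c"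
proof -
  obtain v where v: "v \<noteq> 0" "A *v v = c *s v" using assms(2) by (auto simp: is_eigenvalue_def)
  have "qform A v = c * complex_of_real ((norm v)^2)"
    by (simp add: qform_def v(2) cinner_scale_right cinner_self)
  then have "0 \<le> Re c * (norm v)^2" using psd_qform_nonneg[OF assms(1), of v] by simp
  then show ?thesis using v(1) by (simp add: zero_le_mult_iff)
qed

lemma psd_coercive_if_not_eigenvalue_0:
  assumes ps: "psd A" and "\<not> is_eigenvalue A 0"
  obtains m where "0 < m" "\<And>x. m * (norm x)^2 \<le> Re (qform A x)"
proof -
  obtain x0 :: "complex^'a" where x0: "norm x0 = 1"
    "\<And>y. norm y = 1 \<Longrightarrow> Re (qform A x0) \<le> Re (qform A y)"
    using qform_unit_attains_inf[of A] by blast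
  have "x0 \<noteq> 0" using x0(1) by auto
  then have "A *v x0 \<noteq> 0" using assms(2) by (auto simp: is_eigenvalue_def)
  then have "Re (qform A x0) \<noteq> 0" using psd_kernel_if_qform_eq_0[OF ps] by blast
  then have pos: "0 < Re (qform A x0)" using psd_qform_nonneg[OF ps, of x0] by simp
  have "Re (qform A x0) * (norm x)^2 \<le> Re (qform A x)" for x
  proof (cases "x = 0")
    case False
    then obtain y where "norm y = 1" "Re (qform A x) = (norm x)^2 * Re (qform A y)"
      by (rule qform_homogeneous)
    then show ?thesis using x0(2) by (simp add: mult.commute mult_right_mono)
  qed (simp add: qform_def)
  with pos show ?thesis by (rule that)
qed

lemma trace_mult_ge_if_coercive:
  assumes "psd A" "hermitian W" "\<And>x. m * (norm x)^2 \<le> Re (qform W x)"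
  shows "m * Re (ctrace A) \<le> Re (ctrace (W ** A))"
proof -
  have "hermitian (W - m *\<^sub>R mat 1)"
    using assms(2) by (simp add: hermitian_def adj_diff adj_scaleR adj_def mat_def vec_eq_iff)
  moreover have "0 \<le> Re (qform (W - m *\<^sub>R mat 1) x)" for x
    using assms(3)[of x] by (simp add: qform_diff qform_scaleR qform_one)
  ultimately have "psd (W - m *\<^sub>R mat 1)" by (simp add: psd_def qform_def)
  from trace_mult_psd_nonneg[OF this assms(1)] show ?thesis
    by (simp add: matrix_diff_rdistrib ctrace_diff scalar_matrix_assoc[symmetric] ctrace_scaleR)
qed

section \<open>The Lindblad generator\<close>

definition dissipator :: "'n::finite cmat \<Rightarrow> 'n cmat \<Rightarrow> 'n cmat" where
  "dissipator M A = M ** A ** adj M - cscale (1/2) (adj M ** M ** A) - cscale (1/2) (A ** adj M ** M)"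

lemma lindblad_eq_dissipators:
  "lindblad H L K A = cscale (- \<i>) (H ** A - A ** H) + (\<Sum>k\<in>{1..K}. dissipator (L k) A)"
  by (simp add: lindblad_def dissipator_def)

lemma dissipator_add: "dissipator M (A + B) = dissipator M A + dissipator M B"
  unfolding dissipator_def
  by (simp add: matrix_add_ldistrib matrix_add_rdistrib cscale_add algebra_simps)

lemma dissipator_cscale: "dissipator M (cscale c A) = cscale c (dissipator M A)"
  unfolding dissipator_def
  by (simp add: cscale_mult_left cscale_mult_right cscale_diff cscale_cscale mult.commute)

lemma adj_dissipator: "adj (dissipator M A) = dissipator M (adj A)"
  unfolding dissipator_def
  by (simp add: adj_diff adj_cscale adj_mult matrix_mul_assoc)

lemma lindblad_add: "lindblad H L K (A + B) = lindblad H L K A + lindblad H L K B"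
  unfolding lindblad_eq_dissipators
  by (simp add: dissipator_add sum.distrib matrix_add_ldistrib matrix_add_rdistrib cscale_add
      cscale_diff algebra_simps)

lemma lindblad_cscale: "lindblad H L K (cscale c A) = cscale c (lindblad H L K A)"
  unfolding lindblad_eq_dissipators
  by (simp add: dissipator_cscale cscale_sum[symmetric] cscale_mult_left cscale_mult_right
      cscale_add cscale_diff cscale_cscale mult.commute)

lemma lindblad_scaleR: "lindblad H L K (r *\<^sub>R A) = r *\<^sub>R lindblad H L K A"
  using lindblad_cscale[of H L K "complex_of_real r" A] by (simp add: cscale_of_real)

lemma adj_lindblad: "hermitian H \<Longrightarrow> adj (lindblad H L K A) = lindblad H L K (adj A)"
  unfolding lindblad_eq_dissipators hermitian_def
  by (simp add: adj_add adj_sum adj_dissipator adj_cscale adj_diff adj_mult cscale_minus_diff)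

lemma qform_dissipator_at_kernel:
  assumes "hermitian A" and "A *v x = 0"
  shows "qform (dissipator M A) x = qform A (adj M *v x)"
proof -
  have "qform (M ** A ** adj M) x = qform A (adj M *v x)"
    by (simp add: qform_def matrix_vector_mul_assoc[symmetric] cinner_adj[of x M])
  moreover have "qform (adj M ** M ** A) x = 0"
    using assms(2) by (simp add: qform_def matrix_vector_mul_assoc[symmetric])
  moreover have "qform (A ** adj M ** M) x = 0"
    using assms by (simp add: qform_def matrix_vector_mul_assoc[symmetric] cinner_adj[of x A]
        hermitian_def)
  ultimately show ?thesis by (simp add: dissipator_def qform_diff qform_cscale)
qed

lemma qform_lindblad_at_kernel_nonneg:
  assumes "hermitian H" "psd A" "A *v x = 0"
  shows "0 \<le> Re (qform (lindblad H L K A) x)"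
proof -
  have hA: "hermitian A" using assms(2) by (simp add: psd_def)
  have "qform (H ** A) x = 0"
    using assms(3) by (simp add: qform_def matrix_vector_mul_assoc[symmetric])
  moreover have "qform (A ** H) x = 0"
    using hA assms(3)
    by (simp add: qform_def matrix_vector_mul_assoc[symmetric] cinner_adj[of x A] hermitian_def)
  ultimately have "qform (lindblad H L K A) x = (\<Sum>k\<in>{1..K}. qform A (adj (L k) *v x))"
    by (simp add: lindblad_eq_dissipators qform_add qform_cscale qform_diff qform_sum
        qform_dissipator_at_kernel[OF hA assms(3)])
  then show ?thesis
    using psd_qform_nonneg[OF assms(2)] by (simp add: sum_nonneg)
qed

lemma trace_mult_dissipator: "ctrace (X ** dissipator M A) = ctrace (gen M X ** A)"
proof -
  have "ctrace (X ** (M ** A ** adj M)) = ctrace (adj M ** X ** M ** A)"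
    using ctrace_mult_commute[of "X ** M ** A" "adj M"] by (simp add: matrix_mul_assoc)
  moreover have "ctrace (X ** (A ** adj M ** M)) = ctrace (adj M ** M ** X ** A)"
    using ctrace_mult_commute[of "X ** A" "adj M ** M"] by (simp add: matrix_mul_assoc)
  moreover have "ctrace (X ** (adj M ** M ** A)) = ctrace (X ** adj M ** M ** A)"
    by (simp add: matrix_mul_assoc)
  ultimately show ?thesis
    by (simp add: dissipator_def gen_def matrix_diff_ldistrib matrix_diff_rdistrib cscale_mult_left
        cscale_mult_right ctrace_diff ctrace_cscale)
qed

lemma trace_mult_lindblad:
  assumes "H ** X = X ** H"
  shows "ctrace (X ** lindblad H L K A) = ctrace ((\<Sum>k\<in>{1..K}. gen (L k) X) ** A)"
proof -
  have "ctrace (X ** (A ** H)) = ctrace (H ** (X ** A))"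
    using ctrace_mult_commute[of "X ** A" H] by (simp add: matrix_mul_assoc)
  also have "\<dots> = ctrace (X ** (H ** A))" using assms by (simp add: matrix_mul_assoc)
  finally show ?thesis
    by (simp add: lindblad_eq_dissipators matrix_add_ldistrib ctrace_add cscale_mult_right
        ctrace_cscale matrix_diff_ldistrib ctrace_diff matrix_sum_ldistrib matrix_sum_rdistrib
        ctrace_sum trace_mult_dissipator)
qed

lemma ctrace_lindblad: "ctrace (lindblad H L K A) = 0"
proof -
  have "gen M (mat 1) = 0" for M :: "'a cmat"
    by (simp add: gen_def cscale_def vec_eq_iff)
  then show ?thesis using trace_mult_lindblad[of H "mat 1" L K A] by simp
qed

section \<open>Positivity of Lindblad trajectories\<close>

lemma closed_times_qform_nonpos:
  fixes \<tau> :: "real \<Rightarrow> 'n::finite cmat"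
  assumes "continuous_on {0..} \<tau>"
  shows "closed {t. 0 \<le> t \<and> (\<exists>y\<in>sphere 0 1. Re (qform (\<tau> t) y) \<le> 0)}"
proof -
  define \<tau>' where "\<tau>' = (\<lambda>t. \<tau> (max 0 t))"
  have "continuous_on UNIV \<tau>'"
    unfolding \<tau>'_def by (rule continuous_on_compose2[OF assms]) (auto intro: continuous_intros)
  then have "continuous_on UNIV (\<lambda>p::(complex^'n) \<times> real. Re (qform (\<tau>' (snd p)) (fst p)))"
    by (intro continuous_on_Re_qform_compose continuous_on_compose2[of UNIV \<tau>' UNIV snd]
        continuous_on_fst continuous_on_snd continuous_on_id) auto
  then have "closed {p::(complex^'n) \<times> real. Re (qform (\<tau>' (snd p)) (fst p)) \<le> 0}"
    by (rule closed_Collect_le[OF _ continuous_on_const])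
  from closed_compact_projection[OF compact_sphere this]
  have "closed {t. \<exists>y. y \<in> sphere (0::complex^'n) 1 \<and>
      (y, t) \<in> {p. Re (qform (\<tau>' (snd p)) (fst p)) \<le> 0}}" .
  moreover have "{t. 0 \<le> t \<and> (\<exists>y\<in>sphere 0 1. Re (qform (\<tau> t) y) \<le> 0)} = {0..} \<inter>
      {t. \<exists>y. y \<in> sphere (0::complex^'n) 1 \<and> (y, t) \<in> {p. Re (qform (\<tau>' (snd p)) (fst p)) \<le> 0}}"
    by (auto simp: \<tau>'_def max_def)
  ultimately show ?thesis by (auto intro: closed_Int)
qed

lemma psd_if_posdef_before:
  fixes \<tau> :: "real \<Rightarrow> 'n::finite cmat"
  assumes cont: "continuous_on {0..} \<tau>" and "hermitian (\<tau> s)" and s: "0 < s"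
    and before: "\<And>r y. 0 \<le> r \<Longrightarrow> r < s \<Longrightarrow> norm y = 1 \<Longrightarrow> 0 < Re (qform (\<tau> r) y)"
  shows "psd (\<tau> s)"
proof (rule psdI_unit_sphere[OF assms(2)])
  fix y :: "complex^'n" assume y: "norm y = 1"
  have "continuous_on {0..s} (\<lambda>r. Re (qform (\<tau> r) y))"
    by (intro continuous_on_Re_qform_compose continuous_on_subset[OF cont] continuous_on_const) auto
  then have "((\<lambda>r. Re (qform (\<tau> r) y)) \<longlongrightarrow> Re (qform (\<tau> s) y)) (at_left s)"
    using s unfolding continuous_on_def at_within_Icc_at_left[OF s, symmetric] by simp
  moreover have "eventually (\<lambda>r. 0 \<le> Re (qform (\<tau> r) y)) (at_left s)"
    using eventually_at_left_real[OF s]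
    by (rule eventually_mono) (auto intro: less_imp_le before[OF _ _ y])
  ultimately show "0 \<le> Re (qform (\<tau> s) y)" by (rule tendsto_lowerbound) simp
qed

lemma first_time_qform_nonpos:
  fixes \<tau> :: "real \<Rightarrow> 'n::finite cmat"
  assumes cont: "continuous_on {0..} \<tau>"
    and herm: "\<And>t. 0 \<le> t \<Longrightarrow> hermitian (\<tau> t)"
    and pos0: "\<And>y. norm y = 1 \<Longrightarrow> 0 < Re (qform (\<tau> 0) y)"
    and bad: "0 \<le> t" "norm y = 1" "Re (qform (\<tau> t) y) \<le> 0"
  obtains s x where "0 < s" "norm x = 1" "psd (\<tau> s)" "\<tau> s *v x = 0"
    "\<And>r y. 0 \<le> r \<Longrightarrow> r < s \<Longrightarrow> norm y = 1 \<Longrightarrow> 0 < Re (qform (\<tau> r) y)"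
proof -
  define S where "S = {t. 0 \<le> t \<and> (\<exists>y\<in>sphere 0 1. Re (qform (\<tau> t) y) \<le> 0)}"
  have "t \<in> S" using bad by (auto simp: S_def)
  then have S_ne: "S \<noteq> {}" by blast
  have S_bdd: "bdd_below S" by (auto simp: S_def bdd_below_def)
  define s where "s = Inf S"
  have "closed S" unfolding S_def by (rule closed_times_qform_nonpos[OF cont])
  then have "s \<in> S" using closed_contains_Inf[OF S_ne S_bdd] by (simp add: s_def)
  then obtain x where s0: "0 \<le> s" and x: "norm x = 1" "Re (qform (\<tau> s) x) \<le> 0"
    by (auto simp: S_def)
  have before: "0 < Re (qform (\<tau> r) y)" if "0 \<le> r" "r < s" "norm y = 1" for r y
    using cInf_lower[OF _ S_bdd, of r] that by (force simp: S_def s_def)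
  have "s \<noteq> 0" using pos0[OF x(1)] x(2) by auto
  then have s_pos: "0 < s" using s0 by simp
  have "psd (\<tau> s)" by (rule psd_if_posdef_before[OF cont herm[OF s0] s_pos before])
  moreover from this have "\<tau> s *v x = 0"
    using x(2) psd_qform_nonneg[of "\<tau> s" x] by (intro psd_kernel_if_qform_eq_0) auto
  ultimately show ?thesis using that s_pos x(1) before by blast
qed

lemma DERIV_pos_imp_less_before:
  fixes f :: "real \<Rightarrow> real"
  assumes "(f has_real_derivative f') (at s)" "0 < f'" "0 < s"
  obtains r where "0 \<le> r" "r < s" "f r < f s"
proof -
  from DERIV_pos_inc_left[OF assms(1,2)] obtain d where
    d: "0 < d" "\<And>h. 0 < h \<Longrightarrow> h < d \<Longrightarrow> f (s - h) < f s"
    by blast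
  define h where "h = min d s / 2"
  have "0 < h" "h < d" "h < s" using d(1) assms(3) by (auto simp: h_def)
  then show ?thesis using that[of "s - h"] d(2) by simp
qed

lemma qform_lindblad_shift_pos:
  assumes "hermitian H" "psd (A + \<delta> *\<^sub>R mat 1)" "(A + \<delta> *\<^sub>R mat 1) *v x = 0"
    and "norm x = 1" "Re (qform (lindblad H L K (mat 1)) x) < M" "0 < \<delta>"
  shows "0 < Re (qform (lindblad H L K A + (\<delta> * M) *\<^sub>R mat 1) x)"
proof -
  have "lindblad H L K A + (\<delta> * M) *\<^sub>R mat 1 = lindblad H L K (A + \<delta> *\<^sub>R mat 1)
      + \<delta> *\<^sub>R (M *\<^sub>R mat 1 - lindblad H L K (mat 1))"
    by (simp add: lindblad_add lindblad_scaleR algebra_simps)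
  then have "Re (qform (lindblad H L K A + (\<delta> * M) *\<^sub>R mat 1) x)
      = Re (qform (lindblad H L K (A + \<delta> *\<^sub>R mat 1)) x)
        + \<delta> * (M - Re (qform (lindblad H L K (mat 1)) x))"
    using assms(4) by (simp add: qform_add qform_diff qform_scaleR qform_one)
  moreover have "0 \<le> Re (qform (lindblad H L K (A + \<delta> *\<^sub>R mat 1)) x)"
    using qform_lindblad_at_kernel_nonneg[OF assms(1-3)] .
  ultimately show ?thesis using assms(5,6) by (simp add: add_nonneg_pos)
qed

text \<open>Barrier argument: \<open>\<sigma> t + \<epsilon> e\<^sup>M\<^sup>t I\<close> stays positive definite, because at a first
  time it touches the boundary its derivative on the kernel vector is positive, by the
  tangency condition plus \<open>M\<close> dominating the contribution of \<open>I\<close>.\<close>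
lemma lindblad_perturbed_solution_posdef:
  fixes \<sigma> :: "real \<Rightarrow> 'n::finite cmat"
  assumes hH: "hermitian H"
    and der: "\<And>t. 0 \<le> t \<Longrightarrow> (\<sigma> has_vector_derivative lindblad H L K (\<sigma> t)) (at t within {0..})"
    and herm: "\<And>t. 0 \<le> t \<Longrightarrow> hermitian (\<sigma> t)"
    and psd0: "psd (\<sigma> 0)"
    and M: "\<And>x. norm x = 1 \<Longrightarrow> Re (qform (lindblad H L K (mat 1)) x) < M"
    and \<epsilon>: "0 < \<epsilon>"
    and t: "0 \<le> t" and y: "norm y = 1"
  shows "0 < Re (qform (\<sigma> t + (\<epsilon> * exp (M * t)) *\<^sub>R mat 1) y)"
proof (rule ccontr)
  define \<tau> where "\<tau> = (\<lambda>t. \<sigma> t + (\<epsilon> * exp (M * t)) *\<^sub>R (mat 1 :: 'n cmat))"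
  have qform_\<tau>: "Re (qform (\<tau> t) y) = Re (qform (\<sigma> t) y) + \<epsilon> * exp (M * t)"
    if "norm y = 1" for t y
    using that by (simp add: \<tau>_def qform_add qform_scaleR qform_one)
  have der_\<tau>: "(\<tau> has_vector_derivative lindblad H L K (\<sigma> t) + (\<epsilon> * (exp (M * t) * M)) *\<^sub>R mat 1)
      (at t within {0..})" if "0 \<le> t" for t
  proof -
    have "((\<lambda>t. \<epsilon> * exp (M * t)) has_real_derivative \<epsilon> * (exp (M * t) * M)) (at t within {0..})"
      by (auto intro!: derivative_eq_intros)
    from has_vector_derivative_scaleR[OF this has_vector_derivative_const[of "mat 1 :: 'n cmat"]]
    show ?thesis
      unfolding \<tau>_def by (simp add: has_vector_derivative_add[OF der[OF that]])
  qed
  assume "\<not> 0 < Re (qform (\<tau> t) y)"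
  then have bad: "Re (qform (\<tau> t) y) \<le> 0" by simp
  have cont_\<tau>: "continuous_on {0..} \<tau>"
    using der_\<tau> by (auto simp: continuous_on_eq_continuous_within
        intro: has_vector_derivative_continuous)
  have herm_\<tau>: "hermitian (\<tau> t)" if "0 \<le> t" for t
    using herm[OF that] by (simp add: \<tau>_def hermitian_def adj_add adj_scaleR adj_def mat_def vec_eq_iff)
  have pos0_\<tau>: "0 < Re (qform (\<tau> 0) y)" if "norm y = 1" for y
    using qform_\<tau>[OF that] psd_qform_nonneg[OF psd0, of y] \<epsilon> by simp
  obtain s x where s: "0 < s" and x: "norm x = 1" and psd_s: "psd (\<tau> s)"
    and ker: "\<tau> s *v x = 0"
    and before: "\<And>r y. 0 \<le> r \<Longrightarrow> r < s \<Longrightarrow> norm y = 1 \<Longrightarrow> 0 < Re (qform (\<tau> r) y)"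
    using first_time_qform_nonpos[OF cont_\<tau> herm_\<tau> pos0_\<tau> t y bad] by blast
  define D where "D = lindblad H L K (\<sigma> s) + (\<epsilon> * (exp (M * s) * M)) *\<^sub>R (mat 1 :: 'n cmat)"
  have "(\<tau> has_vector_derivative D) (at s within {0<..})"
    using der_\<tau>[of s] s unfolding D_def by (auto intro: has_vector_derivative_within_subset)
  then have "(\<tau> has_vector_derivative D) (at s)"
    using has_vector_derivative_within_open[of s "{0<..}" \<tau> D] s by simp
  from bounded_linear.has_vector_derivative[OF bounded_linear_Re_qform this]
  have "((\<lambda>r. Re (qform (\<tau> r) x)) has_real_derivative Re (qform D x)) (at s)"
    by (simp add: has_real_derivative_iff_has_vector_derivative)
  moreover have "0 < Re (qform D x)"
    using qform_lindblad_shift_pos[OF hH _ _ x M[OF x], of "\<sigma> s" "\<epsilon> * exp (M * s)"] psd_s ker \<epsilon>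
    by (simp add: D_def \<tau>_def mult.assoc)
  ultimately obtain r where "0 \<le> r" "r < s" "Re (qform (\<tau> r) x) < Re (qform (\<tau> s) x)"
    using s by (rule DERIV_pos_imp_less_before)
  moreover have "Re (qform (\<tau> s) x) = 0" using ker by (simp add: qform_def)
  ultimately show False using before[of r x] x by simp
qed

lemma lindblad_hermitian_solution_psd:
  fixes \<sigma> :: "real \<Rightarrow> 'n::finite cmat"
  assumes hH: "hermitian H"
    and der: "\<And>t. 0 \<le> t \<Longrightarrow> (\<sigma> has_vector_derivative lindblad H L K (\<sigma> t)) (at t within {0..})"
    and herm: "\<And>t. 0 \<le> t \<Longrightarrow> hermitian (\<sigma> t)"
    and psd0: "psd (\<sigma> 0)"
    and t: "0 \<le> t"
  shows "psd (\<sigma> t)"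
proof (rule psdI_unit_sphere[OF herm[OF t]])
  fix y :: "complex^'n" assume y: "norm y = 1"
  obtain x0 :: "complex^'n" where
    "\<And>x. norm x = 1 \<Longrightarrow> Re (qform (lindblad H L K (mat 1)) x) \<le> Re (qform (lindblad H L K (mat 1)) x0)"
    using qform_unit_attains_sup[of "lindblad H L K (mat 1)"] by blast
  then have M: "\<And>x. norm x = 1 \<Longrightarrow> Re (qform (lindblad H L K (mat 1)) x)
      < Re (qform (lindblad H L K (mat 1)) x0) + 1"
    by fastforce
  show "0 \<le> Re (qform (\<sigma> t) y)"
  proof (rule ccontr)
    let ?M = "Re (qform (lindblad H L K (mat 1)) x0) + 1"
    assume neg: "\<not> 0 \<le> Re (qform (\<sigma> t) y)"
    define \<epsilon> where "\<epsilon> = - Re (qform (\<sigma> t) y) / (2 * exp (?M * t))"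
    have "0 < \<epsilon>" using neg by (simp add: \<epsilon>_def divide_neg_pos)
    from lindblad_perturbed_solution_posdef[OF hH der herm psd0 M this t y]
    have "0 < Re (qform (\<sigma> t) y) + \<epsilon> * exp (?M * t)"
      using y by (simp add: qform_add qform_scaleR qform_one)
    then show False using neg by (simp add: \<epsilon>_def)
  qed
qed

text \<open>A trajectory need not be Hermitian a priori (uniqueness of solutions is not available),
  but the Hermitian combinations \<open>c \<rho> + c\<^sup>* \<rho>\<^sup>\<dagger>\<close> are again trajectories.  For
  \<open>c = 1/2\<close> this is the Hermitian part of \<open>\<rho>\<close>; for \<open>c = \<plusminus>\<i>/2\<close> it is \<open>\<mp>\<close> its
  anti-Hermitian part, which starts at \<open>0\<close>, so stays both positive and negative semidefinite.\<close>
definition herm_comb :: "complex \<Rightarrow> 'n::finite cmat \<Rightarrow> 'n cmat" where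
  "herm_comb c A = cscale c A + cscale (cnj c) (adj A)"

lemma hermitian_herm_comb: "hermitian (herm_comb c A)"
  by (simp add: hermitian_def herm_comb_def adj_add adj_cscale add.commute)

lemma lindblad_herm_comb:
  "hermitian H \<Longrightarrow> lindblad H L K (herm_comb c A) = herm_comb c (lindblad H L K A)"
  by (simp add: herm_comb_def lindblad_add lindblad_cscale adj_lindblad)

lemma bounded_linear_herm_comb: "bounded_linear (herm_comb c :: 'n::finite cmat \<Rightarrow> 'n cmat)"
proof -
  have "linear (herm_comb c :: 'n cmat \<Rightarrow> 'n cmat)"
    by (rule linearI)
      (simp_all add: herm_comb_def cscale_add adj_add cscale_scaleR_commute adj_scaleR algebra_simps)
  then show ?thesis by (simp add: linear_conv_bounded_linear)
qed

lemma lindblad_solution_herm_comb: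
  assumes "hermitian H" "lindblad_solution H L K \<rho>" "0 \<le> t"
  shows "((\<lambda>t. herm_comb c (\<rho> t)) has_vector_derivative lindblad H L K (herm_comb c (\<rho> t)))
    (at t within {0..})"
  using bounded_linear.has_vector_derivative[OF bounded_linear_herm_comb, of \<rho>] assms
  unfolding lindblad_solution_def lindblad_herm_comb[OF assms(1)] by blast

lemma lindblad_solution_psd:
  assumes hH: "hermitian H" and sol: "lindblad_solution H L K \<rho>" and psd0: "psd (\<rho> 0)"
    and t: "0 \<le> t"
  shows "psd (\<rho> t)"
proof -
  note herm_comb_psd = lindblad_hermitian_solution_psd[OF hH lindblad_solution_herm_comb[OF hH sol]
      hermitian_herm_comb _ t]
  have adj0: "adj (\<rho> 0) = \<rho> 0" using psd0 by (simp add: psd_def hermitian_def)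
  have "herm_comb (1/2) (\<rho> 0) = \<rho> 0"
    using adj0 by (simp add: herm_comb_def cscale_def vec_eq_iff)
  then have psd_re: "psd (herm_comb (1/2) (\<rho> t))" using herm_comb_psd[of "1/2"] psd0 by simp
  have "herm_comb (\<i>/2) (\<rho> 0) = 0" "herm_comb (- \<i>/2) (\<rho> 0) = 0"
    using adj0 by (simp_all add: herm_comb_def cscale_def vec_eq_iff complex_eq_iff algebra_simps)
  then have "psd (herm_comb (\<i>/2) (\<rho> t))" "psd (herm_comb (- \<i>/2) (\<rho> t))"
    using herm_comb_psd[of "\<i>/2"] herm_comb_psd[of "- \<i>/2"] psd_zero by simp_all
  moreover have "herm_comb (\<i>/2) (\<rho> t) = - herm_comb (- \<i>/2) (\<rho> t)"
    by (simp add: herm_comb_def cscale_def vec_eq_iff)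
  ultimately have "herm_comb (- \<i>/2) (\<rho> t) = 0" by (metis psd_antisym)
  moreover have "\<rho> t = herm_comb (1/2) (\<rho> t) + cscale \<i> (herm_comb (- \<i>/2) (\<rho> t))"
    by (simp add: herm_comb_def cscale_def vec_eq_iff algebra_simps)
  moreover have "cscale \<i> 0 = (0 :: 'a cmat)" by (simp add: cscale_def vec_eq_iff)
  ultimately have "\<rho> t = herm_comb (1/2) (\<rho> t)" by simp
  with psd_re show ?thesis by simp
qed

lemma lindblad_solution_trace:
  assumes sol: "lindblad_solution H L K \<rho>" and t: "0 \<le> t"
  shows "ctrace (\<rho> t) = ctrace (\<rho> 0)"
proof -
  have "((\<lambda>t. ctrace (\<rho> t)) has_vector_derivative 0) (at s within {0..})" if "s \<in> {0..}" for s
  proof -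
    have "(\<rho> has_vector_derivative lindblad H L K (\<rho> s)) (at s within {0..})"
      using sol that by (simp add: lindblad_solution_def)
    from bounded_linear.has_vector_derivative[OF bounded_linear_ctrace this]
    show ?thesis by (simp add: ctrace_lindblad)
  qed
  from has_vector_derivative_zero_constant[OF convex_real_interval(1) this]
  obtain c where "\<And>s. s \<in> {0..} \<Longrightarrow> ctrace (\<rho> s) = c" by blast
  then show ?thesis using t by force
qed

lemma lindblad_solution_density:
  assumes "hermitian H" "lindblad_solution H L K \<rho>" "density (\<rho> 0)" "0 \<le> t"
  shows "density (\<rho> t)"
  using lindblad_solution_psd[OF assms(1,2) _ assms(4)] lindblad_solution_trace[OF assms(2,4)]
    assms(3) by (simp add: density_def)

section \<open>Decay of observables\<close>

lemma exp_decay_if_deriv_le: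
  fixes u :: "real \<Rightarrow> real"
  assumes der: "\<And>t. 0 \<le> t \<Longrightarrow> (u has_real_derivative u' t) (at t within {0..})"
    and le: "\<And>t. 0 \<le> t \<Longrightarrow> u' t \<le> - c * u t"
    and t: "0 \<le> t"
  shows "u t \<le> u 0 * exp (- c * t)"
proof -
  define v where "v = (\<lambda>s. exp (c * s) * u s)"
  have "continuous_on {0..} u"
    using der by (auto simp: continuous_on_eq_continuous_within intro: DERIV_continuous)
  then have cont_v: "continuous_on {0..t} v"
    unfolding v_def by (auto intro!: continuous_intros elim: continuous_on_subset)
  have "v t \<le> v 0"
  proof (rule DERIV_nonpos_imp_decreasing_open[OF t _ cont_v])
    fix s assume s: "0 < s" "s < t"
    have "(u has_real_derivative u' s) (at s within {0<..})"
      using s by (intro DERIV_subset[OF der]) auto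
    then have "(u has_real_derivative u' s) (at s)"
      using s by (simp add: at_within_open[of s "{0<..}"])
    then have "(v has_real_derivative exp (c * s) * (c * u s + u' s)) (at s)"
      unfolding v_def by (auto intro!: derivative_eq_intros simp: algebra_simps)
    moreover have "exp (c * s) * (c * u s + u' s) \<le> 0"
      using le[of s] s by (intro mult_nonneg_nonpos) auto
    ultimately show "\<exists>y. (v has_real_derivative y) (at s) \<and> y \<le> 0" by blast
  qed
  then show ?thesis by (simp add: v_def exp_minus field_simps)
qed

lemma has_vector_derivative_trace_observable:
  assumes "lindblad_solution H L K \<rho>" "H ** X = X ** H" "0 \<le> t"
  shows "((\<lambda>t. Re (ctrace (X ** \<rho> t))) has_real_derivative
      Re (ctrace ((\<Sum>k\<in>{1..K}. gen (L k) X) ** \<rho> t))) (at t within {0..})"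
proof -
  have "(\<rho> has_vector_derivative lindblad H L K (\<rho> t)) (at t within {0..})"
    using assms by (simp add: lindblad_solution_def)
  from bounded_linear.has_vector_derivative[OF bounded_linear_Re_ctrace_mult[of X] this]
  show ?thesis
    unfolding has_real_derivative_iff_has_vector_derivative trace_mult_lindblad[OF assms(2)] .
qed

lemma trace_generator_le:
  fixes L :: "nat \<Rightarrow> 'n::finite cmat"
  assumes "k \<in> {1..K}" "psd A"
    and "loewner_le (gen (L k) X) (cscale (- complex_of_real c) X)"
    and "loewner_le (\<Sum>k'\<in>{1..K} - {k}. gen (L k') X) 0"
  shows "Re (ctrace ((\<Sum>k\<in>{1..K}. gen (L k) X) ** A)) \<le> - c * Re (ctrace (X ** A))"
proof -
  define P where "P = cscale (- complex_of_real c) X - gen (L k) X"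
  define Q where "Q = 0 - (\<Sum>k'\<in>{1..K} - {k}. gen (L k') X)"
  have "psd P" "psd Q" using assms(3,4) by (simp_all add: loewner_le_def P_def Q_def)
  have "(\<Sum>k\<in>{1..K}. gen (L k) X) = gen (L k) X + (\<Sum>k'\<in>{1..K} - {k}. gen (L k') X)"
    by (rule sum.remove) (use assms(1) in auto)
  then have "(\<Sum>k\<in>{1..K}. gen (L k) X) = cscale (- complex_of_real c) X - P - Q"
    by (simp add: P_def Q_def)
  then have "Re (ctrace ((\<Sum>k\<in>{1..K}. gen (L k) X) ** A))
      = - c * Re (ctrace (X ** A)) - Re (ctrace (P ** A)) - Re (ctrace (Q ** A))"
    by (simp add: matrix_diff_rdistrib ctrace_diff cscale_mult_left ctrace_cscale)
  then show ?thesis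
    using trace_mult_psd_nonneg[OF \<open>psd P\<close> assms(2)] trace_mult_psd_nonneg[OF \<open>psd Q\<close> assms(2)]
    by linarith
qed

lemma lindblad_trace_observable_tendsto_0:
  assumes hH: "hermitian H" and sol: "lindblad_solution H L K \<rho>" and psd0: "psd (\<rho> 0)"
    and comm: "H ** X = X ** H" and psdX: "psd X"
    and k: "k \<in> {1..K}" and c: "0 < c"
    and le1: "loewner_le (gen (L k) X) (cscale (- complex_of_real c) X)"
    and le2: "loewner_le (\<Sum>k'\<in>{1..K} - {k}. gen (L k') X) 0"
  shows "((\<lambda>t. ctrace (X ** \<rho> t)) \<longlongrightarrow> 0) at_top"
proof -
  define u where "u = (\<lambda>t. Re (ctrace (X ** \<rho> t)))"
  have psd_t: "psd (\<rho> t)" if "0 \<le> t" for t using lindblad_solution_psd[OF hH sol psd0 that] .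
  have "u t \<le> u 0 * exp (- c * t)" if "0 \<le> t" for t
    unfolding u_def
    by (rule exp_decay_if_deriv_le[OF has_vector_derivative_trace_observable[OF sol comm]
          trace_generator_le[OF k psd_t le1 le2] that])
  moreover have "0 \<le> u t" if "0 \<le> t" for t
    using trace_mult_psd_nonneg[OF psdX psd_t[OF that]] by (simp add: u_def)
  moreover have "((\<lambda>t. u 0 * exp (- c * t)) \<longlongrightarrow> 0) at_top"
  proof -
    have "filterlim (\<lambda>t. c * t) at_top at_top"
      using c by (intro filterlim_tendsto_pos_mult_at_top[OF tendsto_const _ filterlim_ident])
    then have "filterlim (\<lambda>t. - c * t) at_bot at_top"
      by (simp add: filterlim_uminus_at_bot)
    from tendsto_mult_right_zero[OF filterlim_compose[OF exp_at_bot this]] show ?thesis .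
  qed
  ultimately have "(u \<longlongrightarrow> 0) at_top"
    by (intro tendsto_sandwich[of "\<lambda>_. 0" u at_top "\<lambda>t. u 0 * exp (- c * t)"]
        eventually_mono[OF eventually_ge_at_top[of 0]]) auto
  then have "((\<lambda>t. complex_of_real (u t)) \<longlongrightarrow> 0) at_top"
    using tendsto_of_real by fastforce
  moreover have "complex_of_real (u t) = ctrace (X ** \<rho> t)" if "0 \<le> t" for t
    using trace_mult_hermitian_real[of X "\<rho> t"] psdX psd_t[OF that] by (simp add: psd_def u_def)
  then have "eventually (\<lambda>t. complex_of_real (u t) = ctrace (X ** \<rho> t)) at_top"
    by (rule eventually_mono[OF eventually_ge_at_top[of "0::real"]])
  ultimately show ?thesis by (rule Lim_transform_eventually)
qed

lemma eigenvalue_0_if_trace_tendsto_0: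
  fixes \<rho> :: "real \<Rightarrow> 'n::finite cmat"
  assumes psdW: "psd W" and dens: "\<And>t. 0 \<le> t \<Longrightarrow> density (\<rho> t)"
    and lim: "((\<lambda>t. ctrace (W ** \<rho> t)) \<longlongrightarrow> 0) at_top"
  shows "is_eigenvalue W 0"
proof (rule ccontr)
  assume "\<not> is_eigenvalue W 0"
  then obtain m where m: "0 < m" "\<And>x. m * (norm x)^2 \<le> Re (qform W x)"
    using psd_coercive_if_not_eigenvalue_0[OF psdW] by blast
  have "m \<le> Re (ctrace (W ** \<rho> t))" if "0 \<le> t" for t
  proof -
    from dens[OF that] have "psd (\<rho> t)" "ctrace (\<rho> t) = 1" by (auto simp: density_def)
    with trace_mult_ge_if_coercive[of "\<rho> t" W m] psdW m(2) show ?thesis by (simp add: psd_def)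
  qed
  then have "eventually (\<lambda>t. m \<le> Re (ctrace (W ** \<rho> t))) at_top"
    by (rule eventually_mono[OF eventually_ge_at_top[of "0::real"]])
  moreover have "((\<lambda>t. Re (ctrace (W ** \<rho> t))) \<longlongrightarrow> 0) at_top"
    using tendsto_Re[OF lim] by simp
  ultimately show False using tendsto_lowerbound[of _ 0 at_top m] m(1) by force
qed

lemma min_eigenvalue_eq_0:
  assumes "psd W" "is_eigenvalue W 0" "is_min_eigenvalue W d"
  shows "d = 0"
  using assms psd_eigenvalue_nonneg[of W "complex_of_real d"]
  by (force simp: is_min_eigenvalue_def)

theorem theorem17:
  fixes H :: "'n::finite cmat" and L :: "nat \<Rightarrow> 'n cmat" and K :: nat
    and Wl :: "nat \<Rightarrow> 'n cmat" and N :: nat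
  assumes herm_H: "hermitian H"
    and comm: "\<And>l. l \<in> {1..N} \<Longrightarrow> H ** Wl l = Wl l ** H"
    and psd_W: "\<And>l. l \<in> {1..N} \<Longrightarrow> psd (Wl l)"
    and ground0: "\<And>l. l \<in> {1..N} \<Longrightarrow> is_min_eigenvalue (Wl l) 0"
    and decay: "\<And>l. l \<in> {1..N} \<Longrightarrow> \<exists>k\<in>{1..K}. \<exists>c>0.
          loewner_le (gen (L k) (Wl l)) (cscale (- complex_of_real c) (Wl l)) \<and>
          loewner_le (\<Sum>k'\<in>{1..K} - {k}. gen (L k') (Wl l)) 0"
  shows "agss H L K (\<Sum>l\<in>{1..N}. Wl l)"
  unfolding agss_def
proof (intro allI impI)
  fix d \<rho>
  assume min: "is_min_eigenvalue (\<Sum>l\<in>{1..N}. Wl l) d"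
    and sol: "lindblad_solution H L K \<rho>" and dens0: "density (\<rho> 0)"
  have "((\<lambda>t. ctrace (Wl l ** \<rho> t)) \<longlongrightarrow> 0) at_top" if l: "l \<in> {1..N}" for l
    using decay[OF l] dens0 lindblad_trace_observable_tendsto_0[OF herm_H sol _ comm[OF l] psd_W[OF l]]
    by (auto simp: density_def)
  then have lim: "((\<lambda>t. ctrace ((\<Sum>l\<in>{1..N}. Wl l) ** \<rho> t)) \<longlongrightarrow> 0) at_top"
    unfolding matrix_sum_rdistrib ctrace_sum by (rule tendsto_null_sum)
  have psd: "psd (\<Sum>l\<in>{1..N}. Wl l)" by (rule psd_sum) (rule psd_W)
  have "is_eigenvalue (\<Sum>l\<in>{1..N}. Wl l) 0"
    using eigenvalue_0_if_trace_tendsto_0[OF psd _ lim]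
      lindblad_solution_density[OF herm_H sol dens0] by blast
  then have "d = 0" by (rule min_eigenvalue_eq_0[OF psd _ min])
  with lim show "((\<lambda>t. ctrace ((\<Sum>l\<in>{1..N}. Wl l) ** \<rho> t)) \<longlongrightarrow> complex_of_real d) at_top"
    by simp
qed

end
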